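(* Let $\mathbb{F}$ be a finite field with $q$ elements, $q$ odd, and let $f\in\mathbb{F}[X]$ be a polynomial of degree $3$. If $q>9$, then there exists $x\in\mathbb{F}$ such that $f(x)\neq 0$ and $f(x)$ is not a square in $\mathbb{F}$. *)

theory Defs
  imports "HOL-Computational_Algebra.Polynomial" "HOL-Library.Cardinality"
begin

end

theory Submission
  imports Defs
begin

text \<open>Stepanov's method. Put \<open>q = 2m + 1\<close>. If every value of \<open>f\<close> were \<open>0\<close> or a square, then
  \<open>f(x)\<^sup>m\<^sup>+\<^sup>1 = f(x)\<close> for all \<open>x\<close>, so \<open>X\<^sup>q - X\<close> would divide \<open>f\<^sup>m\<^sup>+\<^sup>1 - f\<close>, with a cofactor \<open>A\<close>
  of degree \<open>3(m + 1) - q = m + 2\<close>. Differentiating \<open>f\<^sup>m\<^sup>+\<^sup>1 - f = (X\<^sup>q - X) A\<close> and eliminating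
  \<open>f\<^sup>m\<close> gives \<open>f (m f' + A) = (X\<^sup>q - X) (f A' - (m + 1) f' A)\<close>. The left side is a nonzero
  polynomial of degree \<open>m + 5\<close>, while a nonzero multiple of \<open>X\<^sup>q - X\<close> has degree at least
  \<open>2m + 1\<close>; so \<open>m \<le> 4\<close>, i.e. \<open>q \<le> 9\<close>.\<close>

lemma finite_field_power_card:
  fixes x :: "'a :: {finite, field}"
  shows "x ^ CARD('a) = x"
proof (cases "x = 0")
  case True
  then show ?thesis
    by (simp add: power_0_left)
next
  case False
  let ?U = "UNIV - {0::'a}"
  have "bij_betw ((*) x) ?U ?U"
    by (rule bij_betw_byWitness[where f' = "\<lambda>y. y / x"]) (use False in auto)
  from prod.reindex_bij_betw[OF this, of "\<lambda>y. y"]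
  have "(\<Prod>y\<in>?U. x * y) = (\<Prod>y\<in>?U. y)"
    by simp
  moreover have "(\<Prod>y\<in>?U. x * y) = x ^ card ?U * (\<Prod>y\<in>?U. y)"
    by (simp add: prod.distrib)
  moreover have "(\<Prod>y\<in>?U. y) \<noteq> 0"
    by (subst prod_zero_iff) auto
  ultimately have "x ^ card ?U = 1"
    by (metis mult_cancel_right1)
  moreover have "CARD('a) = Suc (card ?U)"
    by (simp add: card_Diff_singleton Suc_diff_1)
  ultimately show ?thesis
    by (metis power_Suc mult_1_right)
qed

lemma of_nat_card_eq_0: "(of_nat CARD('a) :: 'a :: {finite, ring_1}) = 0"
proof -
  have "bij_betw (\<lambda>y::'a. y + 1) UNIV UNIV"
    by (rule bij_betw_byWitness[where f' = "\<lambda>y. y - 1"]) auto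
  from sum.reindex_bij_betw[OF this, of "\<lambda>y. y"]
  have "(\<Sum>y\<in>UNIV. y + 1) = (\<Sum>y\<in>UNIV. y :: 'a)"
    by simp
  then show ?thesis
    by (simp add: sum.distrib)
qed

lemma power_Suc_half_card_square:
  fixes y :: "'a :: {finite, field}"
  assumes "CARD('a) = 2 * m + 1"
  shows "(y ^ 2) ^ Suc m = y ^ 2"
proof -
  have "(y ^ 2) ^ Suc m = y ^ CARD('a) * y"
    by (simp add: assms power_mult [symmetric] power_add [symmetric] algebra_simps)
  then show ?thesis
    by (simp add: finite_field_power_card power2_eq_square)
qed

lemma degree_diff_eq_left: "degree q < degree p \<Longrightarrow> degree (p - q) = degree p"
  for p q :: "'a :: ab_group_add poly"
  using degree_add_eq_left[of "- q" p] by simp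

lemma degree_pderiv_le: "degree (pderiv p) \<le> degree p - 1"
  by (rule degree_le) (simp add: coeff_pderiv coeff_eq_0)

lemma stepanov_identity:
  fixes f W A :: "'a :: idom poly"
  assumes quotient: "f ^ Suc m - f = W * A" and "pderiv W = -1"
  shows "f * (of_nat m * pderiv f + A) = W * (f * pderiv A - of_nat (Suc m) * pderiv f * A)"
proof -
  have "of_nat (Suc m) * f ^ m * pderiv f - pderiv f = W * pderiv A - A"
    using arg_cong[OF quotient, of pderiv] assms(2)
    by (simp add: pderiv_diff pderiv_mult pderiv_power_Suc of_nat_poly del: power_Suc of_nat_Suc)
  then have "of_nat (Suc m) * f ^ Suc m * pderiv f - f * pderiv f = f * W * pderiv A - f * A"
    by (metis (no_types, lifting) mult.left_commute power_Suc right_diff_distrib mult.assoc)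
  then have "of_nat (Suc m) * (W * A + f) * pderiv f - f * pderiv f = f * W * pderiv A - f * A"
    using quotient by (simp add: algebra_simps del: power_Suc)
  then show ?thesis
    by (simp add: algebra_simps)
qed

definition field_vanishing_poly :: "'a :: {finite, field} poly"
  where "field_vanishing_poly = monom 1 CARD('a) - [:0, 1:]"

lemma poly_field_vanishing_poly [simp]: "poly field_vanishing_poly x = 0"
  by (simp add: field_vanishing_poly_def poly_monom finite_field_power_card)

lemma degree_field_vanishing_poly:
  "degree (field_vanishing_poly :: 'a :: {finite, field} poly) = CARD('a)"
proof -
  have "CARD('a) \<ge> 2"
    using card_mono[of "UNIV :: 'a set" "{0, 1}"] by simp
  then show ?thesis
    unfolding field_vanishing_poly_def
    by (simp add: degree_diff_eq_left degree_monom_eq)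
qed

lemma field_vanishing_poly_nonzero: "field_vanishing_poly \<noteq> 0"
  by (metis degree_0 degree_field_vanishing_poly zero_less_card_finite less_nat_zero_code)

lemma pderiv_field_vanishing_poly:
  "pderiv (field_vanishing_poly :: 'a :: {finite, field} poly) = -1"
  by (simp add: field_vanishing_poly_def pderiv_diff pderiv_monom pderiv_pCons
      of_nat_card_eq_0 one_pCons)

lemma field_vanishing_poly_dvdI:
  fixes p :: "'a :: {finite, field} poly"
  assumes "\<And>x. poly p x = 0"
  shows "field_vanishing_poly dvd p"
proof (rule ccontr)
  let ?r = "p mod field_vanishing_poly"
  assume "\<not> field_vanishing_poly dvd p"
  then have "?r \<noteq> 0"
    by (simp add: mod_eq_0_iff_dvd)
  have "poly ?r x = 0" for x
    using assms[of x] div_mult_mod_eq[of p field_vanishing_poly]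
    by (metis add_0 mult_zero_right poly_add poly_field_vanishing_poly poly_mult)
  then have "CARD('a) \<le> degree ?r"
    using card_poly_roots_bound[OF \<open>?r \<noteq> 0\<close>] by simp
  moreover have "degree ?r < CARD('a)"
    using degree_mod_less'[OF field_vanishing_poly_nonzero \<open>?r \<noteq> 0\<close>]
    by (simp add: degree_field_vanishing_poly)
  ultimately show False
    by simp
qed

lemma field_vanishing_poly_not_dvd_cubic:
  fixes f :: "'a :: {finite, field} poly"
  assumes deg_f: "degree f = 3" and card: "CARD('a) = 2 * m + 1" and "m > 4"
  shows "\<not> field_vanishing_poly dvd f ^ Suc m - f"
proof
  let ?W = "field_vanishing_poly :: 'a poly"
  assume "?W dvd f ^ Suc m - f"
  then obtain A where quotient: "f ^ Suc m - f = ?W * A"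
    by (elim dvdE)
  have "f \<noteq> 0"
    using deg_f by auto
  have "degree (f ^ Suc m) = 3 * Suc m"
    using degree_power_eq[OF \<open>f \<noteq> 0\<close>, of "Suc m"] deg_f by (simp del: power_Suc)
  then have "degree (f ^ Suc m - f) = 3 * Suc m"
    using degree_diff_eq_left[of f "f ^ Suc m"] deg_f \<open>m > 4\<close> by (simp del: power_Suc)
  then have deg_WA: "degree (?W * A) = 3 * Suc m"
    unfolding quotient .
  then have "A \<noteq> 0"
    by auto
  then have deg_A: "degree A = m + 2"
    using deg_WA degree_mult_eq[OF field_vanishing_poly_nonzero, of A]
    by (simp add: degree_field_vanishing_poly card)
  let ?S = "of_nat m * pderiv f + A"
  let ?B = "f * pderiv A - of_nat (Suc m) * pderiv f * A"
  have identity: "f * ?S = ?W * ?B"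
    by (rule stepanov_identity[OF quotient pderiv_field_vanishing_poly])
  have "degree (of_nat m * pderiv f) \<le> 2"
    using degree_mult_le[of "of_nat m" "pderiv f"] degree_pderiv_le[of f]
    by (simp add: deg_f degree_of_nat)
  then have "degree ?S = degree A"
    using deg_A \<open>m > 4\<close> by (intro degree_add_eq_right) linarith
  then have deg_lhs: "degree (f * ?S) = m + 5"
    using degree_mult_eq[OF \<open>f \<noteq> 0\<close>, of ?S] deg_f deg_A by (cases "?S = 0") auto
  then have "?B \<noteq> 0"
    using identity by auto
  then have "degree (?W * ?B) \<ge> 2 * m + 1"
    by (simp add: degree_mult_eq field_vanishing_poly_nonzero degree_field_vanishing_poly card)
  then show False
    using identity deg_lhs \<open>m > 4\<close> by simp
qed

theorem mainTheorem11:
  fixes f :: "'a :: {finite, field} poly"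
  assumes "odd CARD('a)"
    and "degree f = 3"
    and "CARD('a) > 9"
  shows "\<exists>x :: 'a. poly f x \<noteq> 0 \<and> \<not> (\<exists>y :: 'a. poly f x = y ^ 2)"
proof (rule ccontr)
  assume "\<not> ?thesis"
  then have value_square: "poly f x = 0 \<or> (\<exists>y. poly f x = y ^ 2)" for x
    by simp
  define m where "m = CARD('a) div 2"
  have card: "CARD('a) = 2 * m + 1"
    using \<open>odd CARD('a)\<close> unfolding m_def by presburger
  have "field_vanishing_poly dvd f ^ Suc m - f"
  proof (rule field_vanishing_poly_dvdI)
    show "poly (f ^ Suc m - f) x = 0" for x
      using value_square[of x] power_Suc_half_card_square[OF card]
      by (auto simp del: power_Suc)
  qed
  moreover have "m > 4"
    using \<open>CARD('a) > 9\<close> card by linarith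
  ultimately show False
    using field_vanishing_poly_not_dvd_cubic[OF \<open>degree f = 3\<close> card] by blast
qed

end
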